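(* If a history-deterministic one-counter net $\mathcal{N}=(Q,\Sigma,\Delta,q_0,F)$ satisfies the semilinear-strategy property, then there is a deterministic one-counter automaton $\mathcal{D}$ with $\mathcal{L}(\mathcal{D})=\mathcal{L}(\mathcal{N})$.
   Context: A one-counter net (OCN) is $\mathcal{N}=(Q,\Sigma,\Delta,q_0,F)$ with $Q$ finite, $\Sigma$ finite, $q_0\in Q$, $F\subseteq Q$, $\Delta\subseteq Q\times\Sigma\times\{-1,0,1\}\times Q$; configurations $(q,n)\in Q\times\mathbb{N}$, step $(q,n)\xrightarrow{a,d}(p,n+d)$ if $(q,a,d,p)\in\Delta$ and $n+d\ge0$; runs start at $(q_0,0)$ and are accepting if the last state is in $F$; $\mathcal{L}(\mathcal{N})$ is the set of words with an accepting run. Letter game: positions $(c,w)$, start $((q_0,0),\varepsilon)$; each round Adam picks $a\in\Sigma$, Eve picks a step $c\xrightarrow{a,d}c'$; if Eve has none and $wa$ is a prefix of a word of $\mathcal{L}(\mathcal{N})$ she loses; if $wa\in\mathcal{L}(\mathcal{N})$ but the state of $c'$ is not in $F$, Adam wins; otherwise continue; Eve wins infinite plays. $\mathcal{N}$ is history-deterministic if Eve wins the letter game. The game $G_1$ from $(c^E,c^A)$: each round Adam picks $a$; Eve moves her token $c^E\xrightarrow{a,d}c^E_+$; Adam moves his $c^A\xrightarrow{a,d'}c^A_+$; Adam loses if he cannot move; Eve loses if she cannot move while Adam can move and extend to an accepting run, or if $c^A_+$ has an accepting state and $c^E_+$ does not; Eve wins infinite plays. A transition $\delta=(p,a,d,p')$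 is good at $(p,k)$ if Eve wins $G_1$ from $((p,k),(p,k))$ and the step $(p,k)\xrightarrow{a,d}(p',k+d)$ is a winning move for Eve when Adam picks $a$. $\mathcal{N}$ satisfies the semilinear-strategy property if for every $\delta\in\Delta$ the set $\mathcal{S}_\delta=\{k\in\mathbb{N}:\delta\text{ is good at }(p,k)\}$ is semilinear (a finite union of arithmetic progressions, i.e. eventually periodic). A one-counter automaton is $(Q,\Sigma,\Delta,q_0,F)$ with $\Delta\subseteq Q\times\{\mathrm{zero},\neg\mathrm{zero}\}\times\Sigma\times\{-1,0,1\}\times Q$, $\mathrm{zero}$-transitions usable only at counter $0$ (update in $\{0,1\}$), $\neg\mathrm{zero}$-transitions only at positive counter; it is deterministic if $\Delta$ is a partial function from $Q\times\{\mathrm{zero},\neg\mathrm{zero}\}\times\Sigma$ to $\{-1,0,1\}\times Q$. *)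

theory Defs
  imports Main
begin

record ('q, 'a) ocn =
  ocn_states :: "'q set"
  ocn_alph   :: "'a set"
  ocn_trans  :: "('q \<times> 'a \<times> int \<times> 'q) set"
  ocn_init   :: 'q
  ocn_final  :: "'q set"

definition ocn_wf :: "('q, 'a) ocn \<Rightarrow> bool" where
  "ocn_wf N \<longleftrightarrow> finite (ocn_states N) \<and> finite (ocn_alph N) \<and>
     ocn_init N \<in> ocn_states N \<and> ocn_final N \<subseteq> ocn_states N \<and>
     ocn_trans N \<subseteq> ocn_states N \<times> ocn_alph N \<times> {-1, 0, 1} \<times> ocn_states N"

definition ocn_step_d :: "('q, 'a) ocn \<Rightarrow> 'q \<times> nat \<Rightarrow> 'a \<Rightarrow> int \<Rightarrow> 'q \<times> nat \<Rightarrow> bool" where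
  "ocn_step_d N c a d c' \<longleftrightarrow> (fst c, a, d, fst c') \<in> ocn_trans N \<and>
      int (snd c) + d \<ge> 0 \<and> int (snd c') = int (snd c) + d"

definition ocn_step :: "('q, 'a) ocn \<Rightarrow> 'q \<times> nat \<Rightarrow> 'a \<Rightarrow> 'q \<times> nat \<Rightarrow> bool" where
  "ocn_step N c a c' \<longleftrightarrow> (\<exists>d. ocn_step_d N c a d c')"

inductive ocn_run :: "('q, 'a) ocn \<Rightarrow> 'q \<times> nat \<Rightarrow> 'a list \<Rightarrow> 'q \<times> nat \<Rightarrow> bool"
  for N where
  run_nil:  "ocn_run N c [] c"
| run_cons: "ocn_step N c a c' \<Longrightarrow> ocn_run N c' w c'' \<Longrightarrow> ocn_run N c (a # w) c''"

definition ocn_lang :: "('q, 'a) ocn \<Rightarrow> 'a list set" where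
  "ocn_lang N = {w. \<exists>c. ocn_run N (ocn_init N, 0) w c \<and> fst c \<in> ocn_final N}"

text \<open>A strategy of Eve in the letter game is given by the configuration
  f w she has reached after Adam played the word w (her moves are determined
  by the history, which is the word played so far).\<close>
definition letter_reached :: "('q, 'a) ocn \<Rightarrow> ('a list \<Rightarrow> 'q \<times> nat) \<Rightarrow> 'a list \<Rightarrow> bool" where
  "letter_reached N f w \<longleftrightarrow> set w \<subseteq> ocn_alph N \<and>
     (\<forall>i < length w. ocn_step N (f (take i w)) (w ! i) (f (take (Suc i) w)))"

definition letter_game_winning :: "('q, 'a) ocn \<Rightarrow> ('a list \<Rightarrow> 'q \<times> nat) \<Rightarrow> bool" where
  "letter_game_winning N f \<longleftrightarrow> f [] = (ocn_init N, 0) \<and>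
     (\<forall>w a. letter_reached N f w \<and> a \<in> ocn_alph N \<longrightarrow>
        ((\<exists>c'. ocn_step N (f w) a c') \<longrightarrow>
            ocn_step N (f w) a (f (w @ [a])) \<and>
            (w @ [a] \<in> ocn_lang N \<longrightarrow> fst (f (w @ [a])) \<in> ocn_final N)) \<and>
        (\<not> (\<exists>c'. ocn_step N (f w) a c') \<longrightarrow>
            \<not> (\<exists>v. (w @ [a]) @ v \<in> ocn_lang N)))"

definition history_deterministic :: "('q, 'a) ocn \<Rightarrow> bool" where
  "history_deterministic N \<longleftrightarrow> (\<exists>f. letter_game_winning N f)"

text \<open>A history of G_1 is the list of completed rounds (letter of Adam,
  configuration Adam moved his token to).\<close>
type_synonym ('q, 'a) g1_strategy = "('a \<times> ('q \<times> nat)) list \<Rightarrow> 'a \<Rightarrow> 'q \<times> nat"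

definition g1_posE :: "('q, 'a) g1_strategy \<Rightarrow> 'q \<times> nat \<Rightarrow> ('a \<times> ('q \<times> nat)) list \<Rightarrow> 'q \<times> nat" where
  "g1_posE \<sigma> cE h = (if h = [] then cE else \<sigma> (butlast h) (fst (last h)))"

definition g1_posA :: "'q \<times> nat \<Rightarrow> ('a \<times> ('q \<times> nat)) list \<Rightarrow> 'q \<times> nat" where
  "g1_posA cA h = (if h = [] then cA else snd (last h))"

definition g1_consistent :: "('q, 'a) ocn \<Rightarrow> ('q, 'a) g1_strategy \<Rightarrow> 'q \<times> nat \<Rightarrow> 'q \<times> nat
    \<Rightarrow> ('a \<times> ('q \<times> nat)) list \<Rightarrow> bool" where
  "g1_consistent N \<sigma> cE cA h \<longleftrightarrow> (\<forall>i < length h.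
      fst (h ! i) \<in> ocn_alph N \<and>
      ocn_step N (g1_posE \<sigma> cE (take i h)) (fst (h ! i)) (g1_posE \<sigma> cE (take (Suc i) h)) \<and>
      ocn_step N (g1_posA cA (take i h)) (fst (h ! i)) (g1_posA cA (take (Suc i) h)))"

definition g1_winning :: "('q, 'a) ocn \<Rightarrow> ('q, 'a) g1_strategy \<Rightarrow> 'q \<times> nat \<Rightarrow> 'q \<times> nat \<Rightarrow> bool" where
  "g1_winning N \<sigma> cE cA \<longleftrightarrow> (\<forall>h a. g1_consistent N \<sigma> cE cA h \<and> a \<in> ocn_alph N \<longrightarrow>
     ((\<exists>e'. ocn_step N (g1_posE \<sigma> cE h) a e') \<longrightarrow>
        ocn_step N (g1_posE \<sigma> cE h) a (\<sigma> h a) \<and>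
        (\<forall>c'. ocn_step N (g1_posA cA h) a c' \<longrightarrow>
            fst c' \<in> ocn_final N \<longrightarrow> fst (\<sigma> h a) \<in> ocn_final N)) \<and>
     (\<not> (\<exists>e'. ocn_step N (g1_posE \<sigma> cE h) a e') \<longrightarrow>
        \<not> (\<exists>c'. ocn_step N (g1_posA cA h) a c' \<and>
               (\<exists>v c''. ocn_run N c' v c'' \<and> fst c'' \<in> ocn_final N))))"

definition eve_wins_G1 :: "('q, 'a) ocn \<Rightarrow> 'q \<times> nat \<Rightarrow> 'q \<times> nat \<Rightarrow> bool" where
  "eve_wins_G1 N cE cA \<longleftrightarrow> (\<exists>\<sigma>. g1_winning N \<sigma> cE cA)"

definition good_at :: "('q, 'a) ocn \<Rightarrow> 'q \<times> 'a \<times> int \<times> 'q \<Rightarrow> nat \<Rightarrow> bool" where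
  "good_at N \<delta> k = (case \<delta> of (p, a, d, p') \<Rightarrow>
      eve_wins_G1 N (p, k) (p, k) \<and>
      ocn_step_d N (p, k) a d (p', nat (int k + d)) \<and>
      (\<exists>\<sigma>. g1_winning N \<sigma> (p, k) (p, k) \<and> \<sigma> [] a = (p', nat (int k + d))))"

definition semilinear_nat :: "nat set \<Rightarrow> bool" where
  "semilinear_nat S \<longleftrightarrow> (\<exists>P. finite P \<and> S = (\<Union>(b, p)\<in>P. {b + p * i | i. True}))"

definition semilinear_strategy_property :: "('q, 'a) ocn \<Rightarrow> bool" where
  "semilinear_strategy_property N \<longleftrightarrow>
     (\<forall>\<delta> \<in> ocn_trans N. semilinear_nat {k. good_at N \<delta> k})"

datatype guard = Zero | NonZero

record ('q, 'a) oca =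
  oca_states :: "'q set"
  oca_alph   :: "'a set"
  oca_trans  :: "('q \<times> guard \<times> 'a \<times> int \<times> 'q) set"
  oca_init   :: 'q
  oca_final  :: "'q set"

definition oca_wf :: "('q, 'a) oca \<Rightarrow> bool" where
  "oca_wf D \<longleftrightarrow> finite (oca_states D) \<and> finite (oca_alph D) \<and>
     oca_init D \<in> oca_states D \<and> oca_final D \<subseteq> oca_states D \<and>
     oca_trans D \<subseteq> oca_states D \<times> UNIV \<times> oca_alph D \<times> {-1, 0, 1} \<times> oca_states D \<and>
     (\<forall>q a d p. (q, Zero, a, d, p) \<in> oca_trans D \<longrightarrow> d \<in> {0, 1})"

definition oca_deterministic :: "('q, 'a) oca \<Rightarrow> bool" where
  "oca_deterministic D \<longleftrightarrow> (\<forall>q g a d p d' p'.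
     (q, g, a, d, p) \<in> oca_trans D \<longrightarrow> (q, g, a, d', p') \<in> oca_trans D \<longrightarrow> d = d' \<and> p = p')"

definition oca_step :: "('q, 'a) oca \<Rightarrow> 'q \<times> nat \<Rightarrow> 'a \<Rightarrow> 'q \<times> nat \<Rightarrow> bool" where
  "oca_step D c a c' \<longleftrightarrow> (\<exists>g d. (fst c, g, a, d, fst c') \<in> oca_trans D \<and>
      (g = Zero \<longrightarrow> snd c = 0) \<and> (g = NonZero \<longrightarrow> snd c > 0) \<and>
      int (snd c) + d \<ge> 0 \<and> int (snd c') = int (snd c) + d)"

inductive oca_run :: "('q, 'a) oca \<Rightarrow> 'q \<times> nat \<Rightarrow> 'a list \<Rightarrow> 'q \<times> nat \<Rightarrow> bool"
  for D where
  oca_run_nil:  "oca_run D c [] c"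
| oca_run_cons: "oca_step D c a c' \<Longrightarrow> oca_run D c' w c'' \<Longrightarrow> oca_run D c (a # w) c''"

definition oca_lang :: "('q, 'a) oca \<Rightarrow> 'a list set" where
  "oca_lang D = {w. \<exists>c. oca_run D (oca_init D, 0) w c \<and> fst c \<in> oca_final D}"

end

theory Submission
  imports Defs "HOL-Library.Nat_Bijection"
begin

text \<open>From a configuration where Eve wins G_1 against a copy of herself, every letter that can
  still be extended to an accepting word has a good transition, taking a good transition keeps
  such an extension accepting, and Eve still wins G_1 at its target. A history-deterministic net
  therefore accepts exactly along runs made of good transitions. Under the semilinear-strategy
  property, whether a transition is good at counter value k depends, beyond a common threshold T,
  only on k mod a common period P. A deterministic one-counter automaton can thus keep the state
  and the class of k (k itself up to T, T + (k - T) mod P above) in its finite control and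
  k - T (truncated at 0) in its counter, whose zero test tells whether k \<le> T, and follow one
  fixed good transition for each state, letter and class.\<close>

lemma ocn_run_append:
  "ocn_run N c w c' \<Longrightarrow> ocn_run N c' v c'' \<Longrightarrow> ocn_run N c (w @ v) c''"
  by (induction rule: ocn_run.induct) (auto intro: ocn_run.intros)

lemma ocn_run_snoc:
  "ocn_run N c w c' \<Longrightarrow> ocn_step N c' a c'' \<Longrightarrow> ocn_run N c (w @ [a]) c''"
  by (blast intro: ocn_run_append ocn_run.intros)

lemma ocn_run_Nil_iff [simp]: "ocn_run N c [] c' \<longleftrightarrow> c' = c"
  by (auto elim: ocn_run.cases intro: ocn_run.intros)

lemma ocn_run_Cons_iff:
  "ocn_run N c (a # w) c'' \<longleftrightarrow> (\<exists>c'. ocn_step N c a c' \<and> ocn_run N c' w c'')"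
  by (blast elim: ocn_run.cases intro: ocn_run.intros)

lemma ocn_step_in_alph: "ocn_wf N \<Longrightarrow> ocn_step N c a c' \<Longrightarrow> a \<in> ocn_alph N"
  unfolding ocn_wf_def ocn_step_def ocn_step_d_def by auto

lemma ocn_wf_finite_trans:
  assumes "ocn_wf N"
  shows "finite (ocn_trans N)"
proof (rule finite_subset)
  show "ocn_trans N \<subseteq> ocn_states N \<times> ocn_alph N \<times> {-1, 0, 1} \<times> ocn_states N"
    and "finite (ocn_states N \<times> ocn_alph N \<times> {-1, 0, 1} \<times> ocn_states N)"
    using assms unfolding ocn_wf_def by simp_all
qed

section \<open>The game G_1\<close>

lemma g1_posE_Nil [simp]: "g1_posE \<sigma> cE [] = cE"
  and g1_posE_snoc [simp]: "g1_posE \<sigma> cE (h @ [(b, x)]) = \<sigma> h b"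
  by (simp_all add: g1_posE_def)

lemma g1_posA_Nil [simp]: "g1_posA cA [] = cA"
  and g1_posA_snoc [simp]: "g1_posA cA (h @ [(b, x)]) = x"
  by (simp_all add: g1_posA_def)

lemma g1_posE_Cons:
  "g1_posE \<sigma> cE ((a, x) # h) = g1_posE (\<lambda>h. \<sigma> ((a, x) # h)) (\<sigma> [] a) h"
  by (cases h) (auto simp: g1_posE_def)

lemma g1_posA_Cons: "g1_posA cA ((a, x) # h) = g1_posA x h"
  by (cases h) (auto simp: g1_posA_def)

lemma g1_consistent_Nil [simp]: "g1_consistent N \<sigma> cE cA []"
  by (simp add: g1_consistent_def)

lemma g1_consistent_snoc_iff:
  "g1_consistent N \<sigma> cE cA (h @ [(b, x)]) \<longleftrightarrow> g1_consistent N \<sigma> cE cA h \<and> b \<in> ocn_alph N \<and>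
     ocn_step N (g1_posE \<sigma> cE h) b (\<sigma> h b) \<and> ocn_step N (g1_posA cA h) b x"
  by (auto simp: g1_consistent_def nth_append less_Suc_eq)

lemma g1_consistent_Cons_iff:
  "g1_consistent N \<sigma> cE cA ((a, x) # h) \<longleftrightarrow> a \<in> ocn_alph N \<and>
     ocn_step N cE a (\<sigma> [] a) \<and> ocn_step N cA a x \<and>
     g1_consistent N (\<lambda>h. \<sigma> ((a, x) # h)) (\<sigma> [] a) x h"
  unfolding g1_consistent_def
  by (simp add: All_less_Suc2 g1_posE_Cons g1_posA_Cons del: g1_posE_snoc)

lemma g1_winning_Cons:
  assumes "g1_winning N \<sigma> cE cA" "a \<in> ocn_alph N"
    "ocn_step N cE a (\<sigma> [] a)" "ocn_step N cA a x"
  shows "g1_winning N (\<lambda>h. \<sigma> ((a, x) # h)) (\<sigma> [] a) x"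
proof -
  have "\<forall>h b. g1_consistent N (\<lambda>h. \<sigma> ((a, x) # h)) (\<sigma> [] a) x h \<longrightarrow>
      g1_consistent N \<sigma> cE cA ((a, x) # h)"
    using assms(2-4) by (simp add: g1_consistent_Cons_iff)
  with assms(1) show ?thesis
    unfolding g1_winning_def
    by (metis g1_posE_Cons g1_posA_Cons)
qed

lemma g1_winning_answers_accepting_run:
  assumes "ocn_wf N" "g1_winning N \<sigma> cE cA"
  shows "g1_consistent N \<sigma> cE cA h \<Longrightarrow> ocn_step N (g1_posA cA h) b x \<Longrightarrow>
    ocn_run N x v c \<Longrightarrow> fst c \<in> ocn_final N \<Longrightarrow>
    ocn_step N (g1_posE \<sigma> cE h) b (\<sigma> h b) \<and>
    (\<exists>c'. ocn_run N (\<sigma> h b) v c' \<and> fst c' \<in> ocn_final N)"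
proof (induction v arbitrary: h b x)
  case Nil
  have b: "b \<in> ocn_alph N" using ocn_step_in_alph[OF assms(1) Nil.prems(2)] .
  have "x = c" using Nil.prems(3) by simp
  then have "\<exists>c'. ocn_run N x [] c' \<and> fst c' \<in> ocn_final N"
    using Nil.prems(4) by simp
  then have "ocn_step N (g1_posE \<sigma> cE h) b (\<sigma> h b) \<and> fst (\<sigma> h b) \<in> ocn_final N"
    using assms(2) Nil.prems b \<open>x = c\<close> unfolding g1_winning_def by blast
  then show ?case by simp
next
  case (Cons b' v)
  have b: "b \<in> ocn_alph N" using ocn_step_in_alph[OF assms(1) Cons.prems(2)] .
  have "\<exists>c'. ocn_run N x (b' # v) c' \<and> fst c' \<in> ocn_final N"
    using Cons.prems(3,4) by blast
  then have move: "ocn_step N (g1_posE \<sigma> cE h) b (\<sigma> h b)"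
    using assms(2) Cons.prems(1,2) b unfolding g1_winning_def by blast
  obtain x' where x': "ocn_step N x b' x'" "ocn_run N x' v c"
    using Cons.prems(3) by (auto simp: ocn_run_Cons_iff)
  have "g1_consistent N \<sigma> cE cA (h @ [(b, x)])"
    using Cons.prems(1,2) b move by (simp add: g1_consistent_snoc_iff)
  then obtain c' where "ocn_step N (\<sigma> h b) b' (\<sigma> (h @ [(b, x)]) b')"
    "ocn_run N (\<sigma> (h @ [(b, x)]) b') v c'" "fst c' \<in> ocn_final N"
    using Cons.IH[of "h @ [(b, x)]" b' x'] x' Cons.prems(4) by auto
  then show ?case using move by (blast intro: ocn_run.run_cons)
qed

lemma letter_reached_snoc_iff:
  "letter_reached N f (w @ [a]) \<longleftrightarrow>
     letter_reached N f w \<and> a \<in> ocn_alph N \<and> ocn_step N (f w) a (f (w @ [a]))"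
  by (auto simp: letter_reached_def nth_append less_Suc_eq)

lemma g1_posE_letter_strategy:
  "f [] = cE \<Longrightarrow> g1_posE (\<lambda>h a. f (map fst h @ [a])) cE h = f (map fst h)"
  by (cases h rule: rev_cases) (auto simp: g1_posE_def)

lemma g1_consistent_letter_strategy:
  assumes "f [] = c\<^sub>0"
  shows "g1_consistent N (\<lambda>h a. f (map fst h @ [a])) c\<^sub>0 c\<^sub>0 h \<Longrightarrow>
    letter_reached N f (map fst h) \<and> ocn_run N c\<^sub>0 (map fst h) (g1_posA c\<^sub>0 h)"
proof (induction h rule: rev_induct)
  case Nil
  then show ?case by (simp add: letter_reached_def)
next
  case (snoc y h)
  obtain b x where "y = (b, x)" by (cases y)
  then show ?case
    using snoc assms by (auto simp: g1_consistent_snoc_iff letter_reached_snoc_iff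
        g1_posE_letter_strategy intro: ocn_run_snoc)
qed

text \<open>Eve ignores Adam's token: an accepting continuation of his run puts the word into the
  language, which her letter-game strategy already answers.\<close>
lemma letter_game_winning_imp_g1_winning:
  assumes "letter_game_winning N f"
  shows "g1_winning N (\<lambda>h a. f (map fst h @ [a])) (ocn_init N, 0) (ocn_init N, 0)"
proof -
  let ?c\<^sub>0 = "(ocn_init N, 0)" and ?\<sigma> = "\<lambda>h a. f (map fst h @ [a])"
  have f0: "f [] = ?c\<^sub>0" using assms unfolding letter_game_winning_def by blast
  show ?thesis
    unfolding g1_winning_def g1_posE_letter_strategy[where f = f, OF f0]
  proof (intro allI impI)
    fix h a
    assume ha: "g1_consistent N ?\<sigma> ?c\<^sub>0 ?c\<^sub>0 h \<and> a \<in> ocn_alph N"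
    let ?w = "map fst h" and ?F = "ocn_final N"
    have reached: "letter_reached N f ?w" and run: "ocn_run N ?c\<^sub>0 ?w (g1_posA ?c\<^sub>0 h)"
      using g1_consistent_letter_strategy[where f = f, OF f0] ha by blast+
    have in_lang: "(?w @ [a]) @ v \<in> ocn_lang N"
      if "ocn_step N (g1_posA ?c\<^sub>0 h) a c'" "ocn_run N c' v c''" "fst c'' \<in> ?F" for c' v c''
      using that run unfolding ocn_lang_def
      by (simp del: split_paired_Ex) (blast intro: ocn_run_append ocn_run.run_cons)
    from assms reached ha
    have "(Ex (ocn_step N (f ?w) a) \<longrightarrow> ocn_step N (f ?w) a (f (?w @ [a])) \<and>
            (?w @ [a] \<in> ocn_lang N \<longrightarrow> fst (f (?w @ [a])) \<in> ?F)) \<and>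
          (\<not> Ex (ocn_step N (f ?w) a) \<longrightarrow> (\<nexists>v. (?w @ [a]) @ v \<in> ocn_lang N))"
      unfolding letter_game_winning_def by blast
    then show "(Ex (ocn_step N (f ?w) a) \<longrightarrow> ocn_step N (f ?w) a (?\<sigma> h a) \<and>
            (\<forall>c'. ocn_step N (g1_posA ?c\<^sub>0 h) a c' \<longrightarrow> fst c' \<in> ?F \<longrightarrow> fst (?\<sigma> h a) \<in> ?F)) \<and>
          (\<not> Ex (ocn_step N (f ?w) a) \<longrightarrow> (\<nexists>c'. ocn_step N (g1_posA ?c\<^sub>0 h) a c' \<and>
            (\<exists>v c''. ocn_run N c' v c'' \<and> fst c'' \<in> ?F)))"
      using in_lang[of _ "[]"] in_lang by (metis append_Nil2 ocn_run.run_nil)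
  qed
qed

section \<open>Good transitions\<close>

lemma good_at_step_d: "good_at N (p, a, d, p') k \<Longrightarrow> ocn_step_d N (p, k) a d (p', nat (int k + d))"
  by (simp add: good_at_def)

lemma good_at_wf:
  assumes "ocn_wf N" "good_at N (p, a, d, p') k"
  shows "p \<in> ocn_states N \<and> a \<in> ocn_alph N \<and> d \<in> {-1, 0, 1} \<and> p' \<in> ocn_states N \<and>
    0 \<le> int k + d"
  using assms good_at_step_d[OF assms(2)] unfolding ocn_wf_def ocn_step_d_def by auto

lemma good_at_in_trans: "good_at N (p, a, d, p') k \<Longrightarrow> (p, a, d, p') \<in> ocn_trans N"
  by (simp add: good_at_def ocn_step_d_def)

lemma good_at_step: "good_at N (p, a, d, p') k \<Longrightarrow> ocn_step N (p, k) a (p', nat (int k + d))"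
  unfolding ocn_step_def by (blast dest: good_at_step_d)

lemma eve_wins_G1_imp_good_at:
  assumes "ocn_wf N" "eve_wins_G1 N (p, k) (p, k)" "ocn_step N (p, k) a c"
    "ocn_run N c v c''" "fst c'' \<in> ocn_final N"
  shows "\<exists>d p'. good_at N (p, a, d, p') k"
proof -
  obtain \<sigma> where \<sigma>: "g1_winning N \<sigma> (p, k) (p, k)"
    using assms(2) unfolding eve_wins_G1_def by blast
  have "ocn_step N (p, k) a (\<sigma> [] a)"
    using g1_winning_answers_accepting_run[OF assms(1) \<sigma> g1_consistent_Nil] assms(3-5) by simp
  then obtain d where d: "ocn_step_d N (p, k) a d (\<sigma> [] a)"
    unfolding ocn_step_def by blast
  then have "\<sigma> [] a = (fst (\<sigma> [] a), nat (int k + d))"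
    unfolding ocn_step_d_def by (metis nat_int prod.collapse snd_conv)
  with d \<sigma> have "good_at N (p, a, d, fst (\<sigma> [] a)) k"
    unfolding good_at_def eve_wins_G1_def by auto
  then show ?thesis by blast
qed

lemma good_at_preserves_acceptance:
  assumes "ocn_wf N" "good_at N (p, a, d, p') k" "ocn_step N (p, k) a c"
    "ocn_run N c v c''" "fst c'' \<in> ocn_final N"
  shows "\<exists>c'. ocn_run N (p', nat (int k + d)) v c' \<and> fst c' \<in> ocn_final N"
proof -
  obtain \<sigma> where \<sigma>: "g1_winning N \<sigma> (p, k) (p, k)" and move: "\<sigma> [] a = (p', nat (int k + d))"
    using assms(2) unfolding good_at_def by auto
  show ?thesis
    using g1_winning_answers_accepting_run[OF assms(1) \<sigma> g1_consistent_Nil, of a c v c''] assms(3-5)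
    by (simp add: move)
qed

text \<open>Adam copies Eve's first move, so the residual game starts from equal tokens.\<close>
lemma good_at_imp_eve_wins_G1_target:
  assumes "ocn_wf N" "good_at N (p, a, d, p') k"
  shows "eve_wins_G1 N (p', nat (int k + d)) (p', nat (int k + d))"
proof -
  obtain \<sigma> where \<sigma>: "g1_winning N \<sigma> (p, k) (p, k)" and move: "\<sigma> [] a = (p', nat (int k + d))"
    using assms(2) unfolding good_at_def by auto
  have step: "ocn_step N (p, k) a (\<sigma> [] a)"
    using good_at_step[OF assms(2)] move by simp
  have "g1_winning N (\<lambda>h. \<sigma> ((a, \<sigma> [] a) # h)) (\<sigma> [] a) (\<sigma> [] a)"
    by (rule g1_winning_Cons[OF \<sigma> ocn_step_in_alph[OF assms(1) step] step step])
  then show ?thesis unfolding eve_wins_G1_def move by blast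
qed

section \<open>Eventually periodic sets of naturals\<close>

definition eventually_periodic :: "nat set \<Rightarrow> nat \<Rightarrow> nat \<Rightarrow> bool" where
  "eventually_periodic S T p \<longleftrightarrow> (\<forall>k \<ge> T. k \<in> S \<longleftrightarrow> k + p \<in> S)"

lemma eventually_periodic_mult:
  assumes "eventually_periodic S T p" "T \<le> k"
  shows "k + j * p \<in> S \<longleftrightarrow> k \<in> S"
proof (induction j)
  case (Suc j)
  have "T \<le> k + j * p" using assms(2) by simp
  then have "k + j * p + p \<in> S \<longleftrightarrow> k + j * p \<in> S"
    using assms(1) unfolding eventually_periodic_def by blast
  moreover have "k + Suc j * p = k + j * p + p" by simp
  ultimately show ?case using Suc by (simp only:)
qed simp

lemma eventually_periodic_weaken:
  assumes "eventually_periodic S T p" "T \<le> T'"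
  shows "eventually_periodic S T' (j * p)"
  using eventually_periodic_mult[OF assms(1)] assms(2) unfolding eventually_periodic_def by simp

lemma eventually_periodic_common:
  assumes "finite I" "\<And>i. i \<in> I \<Longrightarrow> \<exists>T p. 0 < p \<and> eventually_periodic (S i) T p"
  shows "\<exists>T p. 0 < p \<and> (\<forall>i\<in>I. eventually_periodic (S i) T p)"
  using assms
proof (induction I rule: finite_induct)
  case empty
  show ?case by (intro exI[of _ 0] exI[of _ 1]) simp
next
  case (insert i I)
  have "\<exists>T p. 0 < p \<and> (\<forall>j\<in>I. eventually_periodic (S j) T p)"
    by (rule insert.IH) (use insert.prems in blast)
  then obtain T p where p: "0 < p" "\<forall>j\<in>I. eventually_periodic (S j) T p"
    by blast
  have "\<exists>T' p'. 0 < p' \<and> eventually_periodic (S i) T' p'"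
    using insert.prems by blast
  then obtain T' p' where p': "0 < p'" "eventually_periodic (S i) T' p'"
    by blast
  have "\<forall>j\<in>insert i I. eventually_periodic (S j) (max T T') (p * p')"
    using p(2) p'(2) eventually_periodic_weaken
    by (metis insert_iff max.cobounded1 max.cobounded2 mult.commute)
  then show ?case using p(1) p'(1) by (intro exI[of _ "max T T'"] exI[of _ "p * p'"]) simp
qed

lemma eventually_periodic_linear:
  "\<exists>T q. 0 < q \<and> eventually_periodic {b + p * i | i. True} T q"
proof (cases "p = 0")
  case True
  then have "eventually_periodic {b + p * i | i. True} (Suc b) 1"
    unfolding eventually_periodic_def by auto
  then show ?thesis by blast
next
  case False
  have "k + p = b + p * i \<Longrightarrow> k = b + p * (i - 1)" if "b \<le> k" for k i
    using that False by (cases i) auto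
  then have "eventually_periodic {b + p * i | i. True} b p"
    unfolding eventually_periodic_def by (auto, metis add.assoc mult_Suc_right add.commute)
  then show ?thesis using False by blast
qed

lemma eventually_periodic_UN:
  "(\<And>i. i \<in> I \<Longrightarrow> eventually_periodic (S i) T p) \<Longrightarrow> eventually_periodic (\<Union>i\<in>I. S i) T p"
  unfolding eventually_periodic_def by blast

lemma semilinear_nat_eventually_periodic:
  assumes "semilinear_nat S"
  shows "\<exists>T p. 0 < p \<and> eventually_periodic S T p"
proof -
  obtain P where "finite P" and S: "S = (\<Union>(b, q)\<in>P. {b + q * i | i. True})"
    using assms unfolding semilinear_nat_def by blast
  then obtain T p where "0 < p" "\<forall>(b, q)\<in>P. eventually_periodic {b + q * i | i. True} T p"
    using eventually_periodic_common[of P "\<lambda>(b, q). {b + q * i | i. True}"]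
      eventually_periodic_linear by (auto simp: case_prod_beta)
  then have "eventually_periodic S T p"
    unfolding S by (auto intro: eventually_periodic_UN)
  with \<open>0 < p\<close> show ?thesis by blast
qed

definition counter_class :: "nat \<Rightarrow> nat \<Rightarrow> nat \<Rightarrow> nat" where
  "counter_class T p k = (if k \<le> T then k else T + (k - T) mod p)"

lemma counter_class_le [simp]: "k \<le> T \<Longrightarrow> counter_class T p k = k"
  by (simp add: counter_class_def)

lemma counter_class_ge: "T \<le> k \<Longrightarrow> counter_class T p k = T + (k - T) mod p"
  by (cases "k = T") (simp_all add: counter_class_def)

lemma counter_class_less: "0 < p \<Longrightarrow> counter_class T p k < T + p"
  by (simp add: counter_class_def)

lemma eventually_periodic_counter_class:
  assumes "eventually_periodic S T p"
  shows "counter_class T p k \<in> S \<longleftrightarrow> k \<in> S"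
proof (cases "k \<le> T")
  case False
  then have "k = counter_class T p k + ((k - T) div p) * p" and "T \<le> counter_class T p k"
    by (simp_all add: counter_class_ge)
  then show ?thesis
    using eventually_periodic_mult[OF assms] by metis
qed simp

text \<open>The automaton sees only the class of k and whether k \<le> T; this is enough to
  compute the class of the next counter value and the update of k - T.\<close>
lemma counter_class_update:
  assumes "counter_class T p k1 = counter_class T p k2" "k1 \<le> T \<longleftrightarrow> k2 \<le> T"
    "d \<in> {-1, 0, 1}" "0 \<le> int k1 + d" "0 \<le> int k2 + d"
  shows "counter_class T p (nat (int k1 + d)) = counter_class T p (nat (int k2 + d)) \<and>
    int (nat (int k1 + d) - T) - int (k1 - T) = int (nat (int k2 + d) - T) - int (k2 - T)"
proof (cases "k1 \<le> T")
  case True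
  then show ?thesis using assms(1,2) by simp
next
  case False
  then have "T < k1" "T < k2" using assms(2) by auto
  have shift: "T \<le> nat (int k + d) \<and> int (nat (int k + d) - T) = int (k - T) + d" if "T < k" for k
    using that assms(3) by auto
  have mod_eq: "(k1 - T) mod p = (k2 - T) mod p"
    using assms(1) \<open>T < k1\<close> \<open>T < k2\<close> by (simp add: counter_class_ge)
  have "int ((nat (int k + d) - T) mod p) = (int ((k - T) mod p) + d) mod int p" if "T < k" for k
    using shift[OF that] by (simp add: zmod_int mod_add_left_eq)
  then have "(nat (int k1 + d) - T) mod p = (nat (int k2 + d) - T) mod p"
    using mod_eq \<open>T < k1\<close> \<open>T < k2\<close> by (metis of_nat_eq_iff)
  then show ?thesis
    using shift assms(4,5) \<open>T < k1\<close> \<open>T < k2\<close> by (simp add: counter_class_ge)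
qed


section \<open>The deterministic one-counter automaton\<close>

locale ocn_determinisation =
  fixes N :: "('q, 'a) ocn" and T P :: nat and idx :: "'q \<Rightarrow> nat"
  assumes wf: "ocn_wf N"
    and period_pos: "0 < P"
    and good_periodic: "\<And>\<delta>. \<delta> \<in> ocn_trans N \<Longrightarrow> eventually_periodic {k. good_at N \<delta> k} T P"
    and idx_inj: "inj_on idx (ocn_states N)"
begin

abbreviation cls :: "nat \<Rightarrow> nat" where
  "cls \<equiv> counter_class T P"

definition enc :: "'q \<Rightarrow> nat \<Rightarrow> nat" where
  "enc p m = prod_encode (idx p, m)"

definition det_conf :: "'q \<times> nat \<Rightarrow> nat \<times> nat" where
  "det_conf c = (enc (fst c) (cls (snd c)), snd c - T)"

definition guard_of :: "nat \<Rightarrow> guard" where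
  "guard_of k = (if k \<le> T then Zero else NonZero)"

definition chosen_trans :: "'q \<Rightarrow> 'a \<Rightarrow> nat \<Rightarrow> 'q \<times> 'a \<times> int \<times> 'q" where
  "chosen_trans p a m = (SOME \<delta>. fst \<delta> = p \<and> fst (snd \<delta>) = a \<and> good_at N \<delta> m)"

definition det_trans :: "(nat \<times> guard \<times> 'a \<times> int \<times> nat) set" where
  "det_trans = {(enc p (cls k), guard_of k, a, int (k' - T) - int (k - T), enc p' (cls k')) |
     p a d p' k k'. chosen_trans p a (cls k) = (p, a, d, p') \<and> good_at N (p, a, d, p') k \<and>
       k' = nat (int k + d)}"

definition det_oca :: "(nat, 'a) oca" where
  "det_oca = \<lparr>oca_states = case_prod enc ` (ocn_states N \<times> {..<T + P}), oca_alph = ocn_alph N,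
     oca_trans = det_trans, oca_init = enc (ocn_init N) 0,
     oca_final = case_prod enc ` (ocn_final N \<times> {..<T + P})\<rparr>"

lemma good_at_cls: "good_at N \<delta> (cls k) \<longleftrightarrow> good_at N \<delta> k"
proof (cases "\<delta> \<in> ocn_trans N")
  case True
  then show ?thesis
    using eventually_periodic_counter_class[OF good_periodic] by blast
next
  case False
  then show ?thesis by (cases \<delta>) (auto dest: good_at_in_trans)
qed

lemma enc_eq_iff:
  "p1 \<in> ocn_states N \<Longrightarrow> p2 \<in> ocn_states N \<Longrightarrow> enc p1 m1 = enc p2 m2 \<longleftrightarrow> p1 = p2 \<and> m1 = m2"
  by (simp add: enc_def prod_encode_eq inj_on_eq_iff[OF idx_inj])

lemma enc_cls_in_states: "p \<in> ocn_states N \<Longrightarrow> enc p (cls k) \<in> oca_states det_oca"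
  unfolding det_oca_def using counter_class_less[OF period_pos]
  by (auto intro!: rev_image_eqI[of "(p, cls k)"])

lemma enc_cls_in_final: "p \<in> ocn_final N \<Longrightarrow> enc p (cls k) \<in> oca_final det_oca"
  unfolding det_oca_def using counter_class_less[OF period_pos]
  by (auto intro!: rev_image_eqI[of "(p, cls k)"])

lemma chosen_trans_good:
  assumes "good_at N (p, a, d, p') k"
  obtains d' p'' where "chosen_trans p a (cls k) = (p, a, d', p'')" "good_at N (p, a, d', p'') k"
proof -
  have "\<exists>\<delta>. fst \<delta> = p \<and> fst (snd \<delta>) = a \<and> good_at N \<delta> (cls k)"
    using assms by (intro exI[of _ "(p, a, d, p')"]) (simp add: good_at_cls)
  then have "fst (chosen_trans p a (cls k)) = p \<and> fst (snd (chosen_trans p a (cls k))) = a \<and>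
      good_at N (chosen_trans p a (cls k)) (cls k)"
    unfolding chosen_trans_def by (rule someI_ex)
  then show ?thesis
    using that[of "fst (snd (snd (chosen_trans p a (cls k))))"
        "snd (snd (snd (chosen_trans p a (cls k))))"]
    by (metis prod.collapse good_at_cls)
qed

lemma det_transE:
  assumes "(q, g, a, e, q') \<in> det_trans"
  obtains p d p' k where "q = enc p (cls k)" "g = guard_of k"
    "e = int (nat (int k + d) - T) - int (k - T)" "q' = enc p' (cls (nat (int k + d)))"
    "chosen_trans p a (cls k) = (p, a, d, p')" "good_at N (p, a, d, p') k"
  using assms unfolding det_trans_def by blast

text \<open>A transition of the automaton can be read off from any counter value of the right class
  and guard, not only from the one used to generate it.\<close>
lemma det_trans_at:
  assumes "(enc p (cls k), guard_of k, a, e, q') \<in> det_trans" "p \<in> ocn_states N"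
  obtains d p' where "chosen_trans p a (cls k) = (p, a, d, p')" "good_at N (p, a, d, p') k"
    "e = int (nat (int k + d) - T) - int (k - T)" "q' = enc p' (cls (nat (int k + d)))"
proof -
  from assms(1) obtain p0 d p' k0 where enc: "enc p (cls k) = enc p0 (cls k0)"
    and guard: "guard_of k = guard_of k0" and e: "e = int (nat (int k0 + d) - T) - int (k0 - T)"
    and q': "q' = enc p' (cls (nat (int k0 + d)))"
    and chosen: "chosen_trans p0 a (cls k0) = (p0, a, d, p')" and good0: "good_at N (p0, a, d, p') k0"
    by (rule det_transE)
  have "p0 \<in> ocn_states N" and d: "d \<in> {-1, 0, 1}" and "0 \<le> int k0 + d"
    using good_at_wf[OF wf good0] by auto
  then have "p0 = p" and cls_eq: "cls k0 = cls k"
    using enc enc_eq_iff assms(2) by auto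
  then have good: "good_at N (p, a, d, p') k"
    using good0 good_at_cls by metis
  have "k0 \<le> T \<longleftrightarrow> k \<le> T"
    using guard by (simp add: guard_of_def split: if_splits)
  then have "cls (nat (int k0 + d)) = cls (nat (int k + d)) \<and>
      int (nat (int k0 + d) - T) - int (k0 - T) = int (nat (int k + d) - T) - int (k - T)"
    using counter_class_update[OF cls_eq] d \<open>0 \<le> int k0 + d\<close> good_at_wf[OF wf good] by simp
  then show ?thesis
    using that chosen good e q' \<open>p0 = p\<close> cls_eq by simp
qed

lemma oca_step_det_conf:
  assumes "chosen_trans p a (cls k) = (p, a, d, p')" "good_at N (p, a, d, p') k"
  shows "oca_step det_oca (det_conf (p, k)) a (det_conf (p', nat (int k + d)))"
proof -
  let ?k' = "nat (int k + d)"
  have "(enc p (cls k), guard_of k, a, int (?k' - T) - int (k - T), enc p' (cls ?k')) \<in> det_trans"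
    unfolding det_trans_def using assms by blast
  then show ?thesis
    unfolding oca_step_def det_oca_def det_conf_def
    by (intro exI[of _ "guard_of k"] exI[of _ "int (?k' - T) - int (k - T)"])
      (simp add: guard_of_def)
qed

lemma oca_step_det_confE:
  assumes "oca_step det_oca (det_conf (p, k)) a c'" "p \<in> ocn_states N"
  obtains d p' where "good_at N (p, a, d, p') k" "c' = det_conf (p', nat (int k + d))"
proof -
  obtain g e where t: "(enc p (cls k), g, a, e, fst c') \<in> det_trans"
    and g: "g = Zero \<longrightarrow> k - T = 0" "g = NonZero \<longrightarrow> 0 < k - T"
    and c': "int (snd c') = int (k - T) + e"
    using assms(1) unfolding oca_step_def det_oca_def det_conf_def by auto
  have "g = guard_of k"
    using g by (cases g) (auto simp: guard_of_def)
  with t assms(2) obtain d p' where good: "good_at N (p, a, d, p') k"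
    and "e = int (nat (int k + d) - T) - int (k - T)" "fst c' = enc p' (cls (nat (int k + d)))"
    by (auto elim: det_trans_at)
  with c' have "c' = det_conf (p', nat (int k + d))"
    unfolding det_conf_def by (simp add: prod_eq_iff)
  with good show ?thesis using that by blast
qed

lemma det_oca_run_sound:
  "oca_run det_oca c w c' \<Longrightarrow> c = det_conf (p, k) \<Longrightarrow> p \<in> ocn_states N \<Longrightarrow>
    \<exists>c''. ocn_run N (p, k) w c'' \<and> fst c'' \<in> ocn_states N \<and> c' = det_conf c''"
proof (induction arbitrary: p k rule: oca_run.induct)
  case (oca_run_nil c)
  then show ?case by auto
next
  case (oca_run_cons c a c\<^sub>1 w c')
  obtain d p' where good: "good_at N (p, a, d, p') k"
    and c\<^sub>1: "c\<^sub>1 = det_conf (p', nat (int k + d))"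
    using oca_step_det_confE oca_run_cons.hyps(1) oca_run_cons.prems by metis
  have "p' \<in> ocn_states N"
    using good_at_wf[OF wf good] by blast
  then show ?case
    using oca_run_cons.IH[OF c\<^sub>1] good_at_step[OF good] by (auto intro: ocn_run.run_cons)
qed

lemma det_oca_run_complete:
  "eve_wins_G1 N (p, k) (p, k) \<Longrightarrow> ocn_run N (p, k) w c \<Longrightarrow> fst c \<in> ocn_final N \<Longrightarrow>
    \<exists>c'. oca_run det_oca (det_conf (p, k)) w c' \<and> fst c' \<in> oca_final det_oca"
proof (induction w arbitrary: p k c)
  case Nil
  then have "fst (det_conf (p, k)) \<in> oca_final det_oca"
    using enc_cls_in_final unfolding det_conf_def by simp
  then show ?case by (blast intro: oca_run.oca_run_nil)
next
  case (Cons a v)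
  obtain c\<^sub>1 where step: "ocn_step N (p, k) a c\<^sub>1" and run: "ocn_run N c\<^sub>1 v c"
    using Cons.prems(2) by (auto simp: ocn_run_Cons_iff)
  obtain d p' where "good_at N (p, a, d, p') k"
    using eve_wins_G1_imp_good_at[OF wf Cons.prems(1) step run Cons.prems(3)] by blast
  then obtain d' p'' where chosen: "chosen_trans p a (cls k) = (p, a, d', p'')"
    and good: "good_at N (p, a, d', p'') k"
    by (rule chosen_trans_good)
  obtain c' where "ocn_run N (p'', nat (int k + d')) v c'" "fst c' \<in> ocn_final N"
    using good_at_preserves_acceptance[OF wf good step run Cons.prems(3)] by blast
  then obtain c'' where "oca_run det_oca (det_conf (p'', nat (int k + d'))) v c''"
    "fst c'' \<in> oca_final det_oca"
    using Cons.IH[OF good_at_imp_eve_wins_G1_target[OF wf good]] by blast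
  then show ?case
    using oca_step_det_conf[OF chosen good] by (blast intro: oca_run.oca_run_cons)
qed

lemma det_trans_wf:
  assumes "(q, g, a, e, q') \<in> det_trans"
  shows "q \<in> oca_states det_oca \<and> a \<in> ocn_alph N \<and> e \<in> {-1, 0, 1} \<and>
    q' \<in> oca_states det_oca \<and> (g = Zero \<longrightarrow> e \<in> {0, 1})"
proof -
  from assms obtain p d p' k where "q = enc p (cls k)" "g = guard_of k"
    "e = int (nat (int k + d) - T) - int (k - T)" "q' = enc p' (cls (nat (int k + d)))"
    "chosen_trans p a (cls k) = (p, a, d, p')" and good: "good_at N (p, a, d, p') k"
    by (rule det_transE)
  with good_at_wf[OF wf good] show ?thesis
    using enc_cls_in_states unfolding guard_of_def by auto
qed

lemma det_oca_wf: "oca_wf det_oca"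
proof -
  have "finite (ocn_states N)" "finite (ocn_alph N)" "ocn_init N \<in> ocn_states N"
    "ocn_final N \<subseteq> ocn_states N"
    using wf unfolding ocn_wf_def by auto
  then show ?thesis
    using det_trans_wf period_pos unfolding oca_wf_def
    by (fastforce simp: det_oca_def)
qed

lemma det_oca_deterministic: "oca_deterministic det_oca"
  unfolding oca_deterministic_def
proof (intro allI impI)
  fix q g a e1 q1 e2 q2
  assume "(q, g, a, e1, q1) \<in> oca_trans det_oca" "(q, g, a, e2, q2) \<in> oca_trans det_oca"
  then have t1: "(q, g, a, e1, q1) \<in> det_trans" and t2: "(q, g, a, e2, q2) \<in> det_trans"
    by (simp_all add: det_oca_def)
  from t1 obtain p d1 p1 k where q: "q = enc p (cls k)" "g = guard_of k"
    and e1: "e1 = int (nat (int k + d1) - T) - int (k - T)"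
    and q1: "q1 = enc p1 (cls (nat (int k + d1)))"
    and chosen: "chosen_trans p a (cls k) = (p, a, d1, p1)" and good: "good_at N (p, a, d1, p1) k"
    by (rule det_transE)
  have "p \<in> ocn_states N"
    using good_at_wf[OF wf good] by blast
  with t2 q obtain d2 p2 where "chosen_trans p a (cls k) = (p, a, d2, p2)"
    "e2 = int (nat (int k + d2) - T) - int (k - T)" "q2 = enc p2 (cls (nat (int k + d2)))"
    by (auto elim: det_trans_at)
  with chosen e1 q1 show "e1 = e2 \<and> q1 = q2" by simp
qed

lemma det_oca_lang:
  assumes "eve_wins_G1 N (ocn_init N, 0) (ocn_init N, 0)"
  shows "oca_lang det_oca = ocn_lang N"
proof -
  have init: "(oca_init det_oca, 0) = det_conf (ocn_init N, 0)"
    by (simp add: det_oca_def det_conf_def)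
  have "ocn_init N \<in> ocn_states N" "ocn_final N \<subseteq> ocn_states N"
    using wf unfolding ocn_wf_def by auto
  have "w \<in> ocn_lang N" if w: "w \<in> oca_lang det_oca" for w
  proof -
    obtain c' where "oca_run det_oca (det_conf (ocn_init N, 0)) w c'" "fst c' \<in> oca_final det_oca"
      using w unfolding oca_lang_def init by blast
    then obtain c where run: "ocn_run N (ocn_init N, 0) w c" and "fst c \<in> ocn_states N"
      "fst (det_conf c) \<in> oca_final det_oca"
      using det_oca_run_sound \<open>ocn_init N \<in> ocn_states N\<close> by metis
    then have "fst c \<in> ocn_final N"
      using enc_eq_iff \<open>ocn_final N \<subseteq> ocn_states N\<close> unfolding det_oca_def det_conf_def by auto
    with run show ?thesis
      unfolding ocn_lang_def by blast
  qed
  moreover have "w \<in> oca_lang det_oca" if "w \<in> ocn_lang N" for w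
    using that det_oca_run_complete[OF assms] init unfolding ocn_lang_def oca_lang_def by fastforce
  ultimately show ?thesis by blast
qed

end

theorem lemma6:
  fixes N :: "('q, 'a) ocn"
  assumes "ocn_wf N"
    and "history_deterministic N"
    and "semilinear_strategy_property N"
  shows "\<exists>D :: (nat, 'a) oca. oca_wf D \<and> oca_alph D = ocn_alph N \<and>
           oca_deterministic D \<and> oca_lang D = ocn_lang N"
proof -
  have "\<And>\<delta>. \<delta> \<in> ocn_trans N \<Longrightarrow> \<exists>T p. 0 < p \<and> eventually_periodic {k. good_at N \<delta> k} T p"
    using assms(3) semilinear_nat_eventually_periodic
    unfolding semilinear_strategy_property_def by simp
  then obtain T P where "0 < P" "\<forall>\<delta>\<in>ocn_trans N. eventually_periodic {k. good_at N \<delta> k} T P"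
    using eventually_periodic_common[OF ocn_wf_finite_trans[OF assms(1)],
        of "\<lambda>\<delta>. {k. good_at N \<delta> k}"]
    by blast
  moreover obtain idx :: "'q \<Rightarrow> nat" where "inj_on idx (ocn_states N)"
    using finite_imp_inj_to_nat_seg[of "ocn_states N"] assms(1) unfolding ocn_wf_def by blast
  ultimately interpret ocn_determinisation N T P idx
    using assms(1) by unfold_locales blast+
  obtain f where "letter_game_winning N f"
    using assms(2) unfolding history_deterministic_def by blast
  then have "eve_wins_G1 N (ocn_init N, 0) (ocn_init N, 0)"
    unfolding eve_wins_G1_def by (blast intro: letter_game_winning_imp_g1_winning)
  then show ?thesis
    using det_oca_wf det_oca_deterministic det_oca_lang
    by (intro exI[of _ det_oca]) (simp add: det_oca_def)
qed

end
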